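(* Suppose $G_1$ and $G_2$ are topological groups and there exist continuous injective group homomorphisms $\varphi_1:G_1\to G_2$ and $\varphi_2:G_2\to G_1$. Let $\mathcal C$ be a class of subgroups which is closed under continuous homomorphic images. If $G_1$ has a universal $\mathcal C$ subgroup, then $G_2$ also has a universal $\mathcal C$ subgroup.
   Context: $\mathcal C$ is a class of subgroups of topological groups; closed under continuous homomorphic images means: if $H\in\mathcal C$ is a subgroup of a topological group $G$ and $\psi:G\to G'$ is a continuous group homomorphism into a topological group $G'$, then $\psi(H)\in\mathcal C$. For subgroups $H\subseteq G$ and $K\subseteq G'$, write $H\le_g K$ if there is a continuous homomorphism $\varphi:G\to G'$ with $\varphi^{-1}(K)=H$. A universal $\mathcal C$ subgroup of $G$ is a subgroup $K\subseteq G$ with $K\in\mathcal C$ such that $H\le_g K$ (via a continuous endomorphism of $G$) for every subgroup $H\subseteq G$ with $H\in\mathcal C$. *)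

theory Defs
  imports "HOL-Analysis.Analysis" "HOL-Algebra.Group"
begin

definition topgroup :: "('a, 'm) monoid_scheme \<Rightarrow> 'a topology \<Rightarrow> bool" where
  "topgroup G T \<longleftrightarrow> group G \<and> topspace T = carrier G \<and>
     continuous_map (prod_topology T T) T (\<lambda>(x, y). x \<otimes>\<^bsub>G\<^esub> y) \<and>
     continuous_map T T (\<lambda>x. inv\<^bsub>G\<^esub> x)"

definition cont_hom ::
  "('a, 'm) monoid_scheme \<Rightarrow> 'a topology \<Rightarrow> ('b, 'n) monoid_scheme \<Rightarrow> 'b topology \<Rightarrow> ('a \<Rightarrow> 'b) \<Rightarrow> bool" where
  "cont_hom G T G' T' f \<longleftrightarrow> f \<in> hom G G' \<and> continuous_map T T' f"

text \<open>A class of subgroups of topological groups is represented (for groups with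
  elements of a given type) by a predicate C G T H, meaning "the subgroup H of the
  topological group (G,T) belongs to the class".\<close>
definition closed_hom_images ::
  "(('a, 'm) monoid_scheme \<Rightarrow> 'a topology \<Rightarrow> 'a set \<Rightarrow> bool) \<Rightarrow>
   (('b, 'n) monoid_scheme \<Rightarrow> 'b topology \<Rightarrow> 'b set \<Rightarrow> bool) \<Rightarrow> bool" where
  "closed_hom_images C C' \<longleftrightarrow>
     (\<forall>G T G' T' H f. topgroup G T \<and> topgroup G' T' \<and> subgroup H G \<and> C G T H \<and>
        cont_hom G T G' T' f \<longrightarrow> C' G' T' (f ` H))"

definition universal_subgroup ::
  "(('a, 'm) monoid_scheme \<Rightarrow> 'a topology \<Rightarrow> 'a set \<Rightarrow> bool) \<Rightarrow>
   ('a, 'm) monoid_scheme \<Rightarrow> 'a topology \<Rightarrow> 'a set \<Rightarrow> bool" where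
  "universal_subgroup C G T K \<longleftrightarrow> subgroup K G \<and> C G T K \<and>
     (\<forall>H. subgroup H G \<and> C G T H \<longrightarrow>
        (\<exists>f. cont_hom G T G T f \<and> {x \<in> carrier G. f x \<in> K} = H))"

end

theory Submission
  imports Defs
begin

text \<open>If K is universal in G1, then its image under the embedding \<phi>1 is universal in G2:
  a subgroup H of G2 is carried by \<phi>2 into the class in G1, so it is the preimage of K
  under some continuous endomorphism f of G1, and then H is the preimage of \<phi>1 ` K under
  the continuous endomorphism \<phi>1 \<circ> f \<circ> \<phi>2 of G2, since both embeddings are injective.\<close>

lemma cont_hom_compose:
  assumes "cont_hom G T G' T' f" and "cont_hom G' T' G'' T'' g"
  shows "cont_hom G T G'' T'' (g \<circ> f)"
  using assms hom_compose continuous_map_compose unfolding cont_hom_def by blast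

lemma cont_hom_image_subgroup:
  assumes "topgroup G T" and "topgroup G' T'" and "cont_hom G T G' T' f" and "subgroup H G"
  shows "subgroup (f ` H) G'"
proof -
  have "group_hom G G' f"
    using assms(1-3) unfolding topgroup_def cont_hom_def by (simp add: group_hom_def group_hom_axioms_def)
  then show ?thesis
    using assms(4) by (rule group_hom.subgroup_img_is_subgroup)
qed

lemma closed_hom_imagesD:
  assumes "closed_hom_images C C'" and "topgroup G T" and "topgroup G' T'"
    and "subgroup H G" and "C G T H" and "cont_hom G T G' T' f"
  shows "C' G' T' (f ` H)"
  using assms unfolding closed_hom_images_def by blast

lemma preimage_through_embeddings:
  assumes "f \<in> A \<rightarrow> A" and "inj_on \<phi>1 A" and "\<phi>2 \<in> B \<rightarrow> A" and "inj_on \<phi>2 B"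
    and "H \<subseteq> B" and "K \<subseteq> A" and "{x \<in> A. f x \<in> K} = \<phi>2 ` H"
  shows "{x \<in> B. \<phi>1 (f (\<phi>2 x)) \<in> \<phi>1 ` K} = H"
proof -
  have "\<phi>1 (f (\<phi>2 x)) \<in> \<phi>1 ` K \<longleftrightarrow> \<phi>2 x \<in> \<phi>2 ` H" if "x \<in> B" for x
    using that assms(1-3,6,7) inj_on_image_mem_iff[of \<phi>1 A "f (\<phi>2 x)" K] by blast
  moreover have "\<phi>2 x \<in> \<phi>2 ` H \<longleftrightarrow> x \<in> H" if "x \<in> B" for x
    using that assms(4,5) by (simp add: inj_on_image_mem_iff)
  ultimately show ?thesis
    using assms(5) by blast
qed

lemma universal_subgroup_embedding_image:
  assumes "topgroup G1 T1" and "topgroup G2 T2"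
    and "cont_hom G1 T1 G2 T2 \<phi>1" and "inj_on \<phi>1 (carrier G1)"
    and "cont_hom G2 T2 G1 T1 \<phi>2" and "inj_on \<phi>2 (carrier G2)"
    and "closed_hom_images C1 C2" and "closed_hom_images C2 C1"
    and K: "universal_subgroup C1 G1 T1 K"
  shows "universal_subgroup C2 G2 T2 (\<phi>1 ` K)"
proof -
  have K_sub: "subgroup K G1" and K_class: "C1 G1 T1 K"
    using K unfolding universal_subgroup_def by auto
  have "\<exists>g. cont_hom G2 T2 G2 T2 g \<and> {x \<in> carrier G2. g x \<in> \<phi>1 ` K} = H"
    if H_sub: "subgroup H G2" and H_class: "C2 G2 T2 H" for H
  proof -
    have "subgroup (\<phi>2 ` H) G1" and "C1 G1 T1 (\<phi>2 ` H)"
      using cont_hom_image_subgroup closed_hom_imagesD assms(1,2,5,8) H_sub H_class by blast+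
    then obtain f where f: "cont_hom G1 T1 G1 T1 f" and f_pre: "{x \<in> carrier G1. f x \<in> K} = \<phi>2 ` H"
      using K unfolding universal_subgroup_def by blast
    have "cont_hom G2 T2 G2 T2 (\<phi>1 \<circ> f \<circ> \<phi>2)"
      using cont_hom_compose[OF cont_hom_compose[OF assms(5) f] assms(3)] by (simp add: comp_assoc)
    moreover have "{x \<in> carrier G2. (\<phi>1 \<circ> f \<circ> \<phi>2) x \<in> \<phi>1 ` K} = H"
      using preimage_through_embeddings[OF _ assms(4) _ assms(6) subgroup.subset[OF H_sub]
          subgroup.subset[OF K_sub] f_pre] f assms(5)
      unfolding cont_hom_def hom_def by simp
    ultimately show ?thesis by blast
  qed
  moreover have "subgroup (\<phi>1 ` K) G2" and "C2 G2 T2 (\<phi>1 ` K)"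
    using cont_hom_image_subgroup closed_hom_imagesD assms(1,2,3,7) K_sub K_class by blast+
  ultimately show ?thesis
    unfolding universal_subgroup_def by blast
qed

theorem mainTheorem5:
  fixes G1 :: "('a, 'm) monoid_scheme" and T1 :: "'a topology"
    and G2 :: "('b, 'n) monoid_scheme" and T2 :: "'b topology"
    and C1 :: "('a, 'm) monoid_scheme \<Rightarrow> 'a topology \<Rightarrow> 'a set \<Rightarrow> bool"
    and C2 :: "('b, 'n) monoid_scheme \<Rightarrow> 'b topology \<Rightarrow> 'b set \<Rightarrow> bool"
    and \<phi>1 :: "'a \<Rightarrow> 'b" and \<phi>2 :: "'b \<Rightarrow> 'a"
  assumes "topgroup G1 T1" and "topgroup G2 T2"
    and "cont_hom G1 T1 G2 T2 \<phi>1" and "inj_on \<phi>1 (carrier G1)"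
    and "cont_hom G2 T2 G1 T1 \<phi>2" and "inj_on \<phi>2 (carrier G2)"
    and "closed_hom_images C1 C1" and "closed_hom_images C1 C2"
    and "closed_hom_images C2 C1" and "closed_hom_images C2 C2"
    and "\<exists>K. universal_subgroup C1 G1 T1 K"
  shows "\<exists>K. universal_subgroup C2 G2 T2 K"
  \<comment> \<open>Only the two cross closure hypotheses are needed; closure of each class in itself is not.\<close>
  using assms(11) universal_subgroup_embedding_image[OF assms(1-6,8,9)] by blast

end
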